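(* $\frac{3n}{2}+o(n)\le\mathrm{sat}_\circlearrowright(n,S_3)=O(n\log_2 n)$.
   Context: $\Omega_n=\{v_0,\dots,v_{n-1}\}$ with cyclic order $v_0<\dots<v_{n-1}<v_0$ (indices mod $n$). A $3$-cgh on $\Omega_n$ is a family of $3$-subsets of $\Omega_n$. For a $3$-cgh $F$, $H$ contains a copy of $F$ if there is an injection of the vertex set of $F$ into $\Omega_n$ preserving the cyclic order and mapping every edge of $F$ to an edge of $H$. $H$ is $F$-saturated if it contains no copy of $F$ but $H\cup\{e\}$ does for every $e\in\binom{\Omega_n}{3}\setminus H$; $\mathrm{sat}_\circlearrowright(n,F)$ is the minimum number of edges of an $F$-saturated $3$-cgh on $\Omega_n$. $S_3$ is the $3$-cgh on $\Omega_5$ with edges $\{v_0,v_1,v_3\}$ and $\{v_0,v_2,v_4\}$. *)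

theory Defs
  imports Complex_Main "HOL-Library.Landau_Symbols"
begin

text \<open>Vertices of Omega_n are the naturals 0..<n (v_i = i), with the cyclic order
  0 < 1 < ... < n-1 < 0.\<close>

definition cyc_between :: "nat \<Rightarrow> nat \<Rightarrow> nat \<Rightarrow> bool" where
  "cyc_between a b c \<longleftrightarrow> (a < b \<and> b < c) \<or> (b < c \<and> c < a) \<or> (c < a \<and> a < b)"

definition cgh3 :: "nat \<Rightarrow> nat set set \<Rightarrow> bool" where
  "cgh3 n H \<longleftrightarrow> (\<forall>e\<in>H. e \<subseteq> {0..<n} \<and> card e = 3)"

definition triples :: "nat \<Rightarrow> nat set set" where
  "triples n = {e. e \<subseteq> {0..<n} \<and> card e = 3}"

definition contains_copy :: "nat \<Rightarrow> nat set set \<Rightarrow> nat \<Rightarrow> nat set set \<Rightarrow> bool" where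
  "contains_copy n H k F \<longleftrightarrow>
     (\<exists>\<phi>. inj_on \<phi> {0..<k} \<and> \<phi> ` {0..<k} \<subseteq> {0..<n} \<and>
          (\<forall>i j l. i < j \<and> j < l \<and> l < k \<longrightarrow> cyc_between (\<phi> i) (\<phi> j) (\<phi> l)) \<and>
          (\<forall>e\<in>F. \<phi> ` e \<in> H))"

definition saturated :: "nat \<Rightarrow> nat set set \<Rightarrow> nat \<Rightarrow> nat set set \<Rightarrow> bool" where
  "saturated n H k F \<longleftrightarrow> cgh3 n H \<and> \<not> contains_copy n H k F \<and>
     (\<forall>e \<in> triples n - H. contains_copy n (insert e H) k F)"

definition sat_cyc :: "nat \<Rightarrow> nat \<Rightarrow> nat set set \<Rightarrow> nat" where
  "sat_cyc n k F = Min (card ` {H. saturated n H k F})"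

definition S3 :: "nat set set" where
  "S3 = {{0,1,3}, {0,2,4}}"

end

theory Submission
  imports Defs
begin

(* Upper bound: on vertices 0 < ... < n-1, the consecutive triples {p, p+1, p+2} with p > 0,
   the fan {0, q, q+1} and the zigzag {0, q, r} with q + r \<in> {n, n+1} form an S3-saturated
   hypergraph with at most 4n edges, so sat(n, S3) is even linear.

   Lower bound: the copies of S3 on five vertices v0 < ... < v4 are its five cyclic rotations,
   and none of their edges consists of three consecutive vertices; so a saturated H contains all
   n - 2 consecutive triples.  For each i, the gapped triples {i, i+1, i+3} and {i, i+2, i+3} are
   either edges of H or, being missing, force a non-consecutive edge near i into H.  A
   non-consecutive edge is forced by at most four of these 2(n-3) gapped triples, so H has at
   least (n-3)/2 further edges, and |H| \<ge> 3n/2 - 7/2. *)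

lemma sorted_triple_eq_iff:
  fixes p q r a b c :: nat
  assumes "p < q" "q < r" "a < b" "b < c"
  shows "{p, q, r} = {a, b, c} \<longleftrightarrow> p = a \<and> q = b \<and> r = c"
proof
  assume eq: "{p, q, r} = {a, b, c}"
  then have "p \<in> {a, b, c}" "a \<in> {p, q, r}" "r \<in> {a, b, c}" "c \<in> {p, q, r}"
    by blast+
  then have "p = a" "r = c"
    using assms by auto
  with eq assms show "p = a \<and> q = b \<and> r = c"
    by auto
qed auto

lemma card_3_obtain_sorted:
  fixes e :: "nat set"
  assumes "card e = 3"
  obtains p q r where "p < q" "q < r" "e = {p, q, r}"
proof -
  obtain x y z where "e = {x, y, z}" "x \<noteq> y" "x \<noteq> z" "y \<noteq> z"
    using assms card_3_iff by metis
  then show thesis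
    using that by (cases x y rule: linorder_cases; cases x z rule: linorder_cases;
        cases y z rule: linorder_cases) (auto simp: insert_commute)
qed

lemma card_consecutive_triples: "card ((\<lambda>j. {j, j + 1, j + 2}) ` {..<m}) = m"
proof -
  have "inj (\<lambda>j::nat. {j, j + 1, j + 2})"
    by (rule injI) (simp add: sorted_triple_eq_iff)
  then show ?thesis
    by (simp add: card_image inj_on_subset)
qed

lemma obtain_least_of_5:
  fixes a b c d e :: nat
  assumes "a \<noteq> b" "a \<noteq> c" "a \<noteq> d" "a \<noteq> e" "b \<noteq> c" "b \<noteq> d" "b \<noteq> e" "c \<noteq> d" "c \<noteq> e" "d \<noteq> e"
  obtains "a < b" "a < c" "a < d" "a < e" | "b < a" "b < c" "b < d" "b < e"
    | "c < a" "c < b" "c < d" "c < e" | "d < a" "d < b" "d < c" "d < e"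
    | "e < a" "e < b" "e < c" "e < d"
proof -
  define m where "m = min (min (min (min a b) c) d) e"
  have le: "m \<le> a" "m \<le> b" "m \<le> c" "m \<le> d" "m \<le> e"
    unfolding m_def by auto
  have "m = a \<or> m = b \<or> m = c \<or> m = d \<or> m = e"
    unfolding m_def min_def by auto
  then show thesis
  proof (elim disjE)
    assume "m = a"
    then show thesis using that(1) le assms by (metis le_neq_implies_less)
  next
    assume "m = b"
    then show thesis using that(2) le assms by (metis le_neq_implies_less)
  next
    assume "m = c"
    then show thesis using that(3) le assms by (metis le_neq_implies_less)
  next
    assume "m = d"
    then show thesis using that(4) le assms by (metis le_neq_implies_less)
  next
    assume "m = e"
    then show thesis using that(5) le assms by (metis le_neq_implies_less)
  qed
qed

lemma cyc_between_distinct: "cyc_between a b c \<Longrightarrow> a \<noteq> b \<and> b \<noteq> c \<and> a \<noteq> c"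
  unfolding cyc_between_def by auto

lemma cyc_between_rotate: "cyc_between a b c \<Longrightarrow> cyc_between b c a"
  unfolding cyc_between_def by auto

lemma cyc_between_from_least: "cyc_between a b c \<Longrightarrow> a < b \<Longrightarrow> a < c \<Longrightarrow> b < c"
  unfolding cyc_between_def by auto

lemma contains_copy_S3I:
  assumes "{w0, w1, w2, w3, w4} \<subseteq> {0..<n}"
    and cyc: "cyc_between w0 w1 w2" "cyc_between w0 w1 w3" "cyc_between w0 w1 w4"
      "cyc_between w0 w2 w3" "cyc_between w0 w2 w4" "cyc_between w0 w3 w4"
      "cyc_between w1 w2 w3" "cyc_between w1 w2 w4" "cyc_between w1 w3 w4"
      "cyc_between w2 w3 w4"
    and "{w0, w1, w3} \<in> H" "{w0, w2, w4} \<in> H"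
  shows "contains_copy n H 5 S3"
  unfolding contains_copy_def
proof (intro exI conjI allI impI)
  let ?w = "[w0, w1, w2, w3, w4]"
  have "distinct ?w"
    using cyc_between_distinct[OF cyc(1)] cyc_between_distinct[OF cyc(6)]
      cyc_between_distinct[OF cyc(9)] cyc_between_distinct[OF cyc(10)] by simp
  then show "inj_on ((!) ?w) {0..<5}"
    by (simp add: inj_on_nth)
  have "(!) ?w ` {0..<5} \<subseteq> set ?w"
    by (rule image_subsetI, rule nth_mem) simp
  then show "(!) ?w ` {0..<5} \<subseteq> {0..<n}"
    using assms(1) unfolding set_simps by (rule order.trans)
  show "\<forall>e\<in>S3. (!) ?w ` e \<in> H"
    using assms(12,13) by (simp add: S3_def)
  have less5: "k < 5 \<Longrightarrow> k = 0 \<or> k = 1 \<or> k = 2 \<or> k = 3 \<or> k = 4" for k :: nat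
    by auto
  fix i j l :: nat
  assume "i < j \<and> j < l \<and> l < 5"
  then have "i < j" "j < l" "i < 5" "j < 5" "l < 5"
    by linarith+
  then show "cyc_between (?w ! i) (?w ! j) (?w ! l)"
    using less5[OF \<open>i < 5\<close>] less5[OF \<open>j < 5\<close>] less5[OF \<open>l < 5\<close>] cyc
    by (elim disjE) simp_all
qed

text \<open>The copies of S3 on vertices \<open>v0 < v1 < v2 < v3 < v4\<close> are its five cyclic rotations,
  each written with its vertices in increasing order.\<close>

definition S3_pattern :: "nat set set \<Rightarrow> nat \<Rightarrow> nat \<Rightarrow> nat \<Rightarrow> nat \<Rightarrow> nat \<Rightarrow> bool" where
  "S3_pattern H v0 v1 v2 v3 v4 \<longleftrightarrow>
     ({v0, v1, v3} \<in> H \<and> {v0, v2, v4} \<in> H) \<or> ({v1, v2, v4} \<in> H \<and> {v0, v1, v3} \<in> H) \<or>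
     ({v0, v2, v3} \<in> H \<and> {v1, v2, v4} \<in> H) \<or> ({v1, v3, v4} \<in> H \<and> {v0, v2, v3} \<in> H) \<or>
     ({v0, v2, v4} \<in> H \<and> {v1, v3, v4} \<in> H)"

lemma contains_copy_S3_if_pattern:
  assumes "v0 < v1" "v1 < v2" "v2 < v3" "v3 < v4" "v4 < n" "S3_pattern H v0 v1 v2 v3 v4"
  shows "contains_copy n H 5 S3"
  using assms(6) unfolding S3_pattern_def
proof (elim disjE conjE)
  assume "{v0, v1, v3} \<in> H" "{v0, v2, v4} \<in> H"
  then show ?thesis
    by (intro contains_copy_S3I[of v0 v1 v2 v3 v4])
      (use assms in \<open>auto simp: cyc_between_def\<close>)
next
  assume "{v1, v2, v4} \<in> H" "{v0, v1, v3} \<in> H"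
  then show ?thesis
    by (intro contains_copy_S3I[of v1 v2 v3 v4 v0])
      (use assms in \<open>auto simp: cyc_between_def insert_commute\<close>)
next
  assume "{v0, v2, v3} \<in> H" "{v1, v2, v4} \<in> H"
  then show ?thesis
    by (intro contains_copy_S3I[of v2 v3 v4 v0 v1])
      (use assms in \<open>auto simp: cyc_between_def insert_commute\<close>)
next
  assume "{v1, v3, v4} \<in> H" "{v0, v2, v3} \<in> H"
  then show ?thesis
    by (intro contains_copy_S3I[of v3 v4 v0 v1 v2])
      (use assms in \<open>auto simp: cyc_between_def insert_commute\<close>)
next
  assume "{v0, v2, v4} \<in> H" "{v1, v3, v4} \<in> H"
  then show ?thesis
    by (intro contains_copy_S3I[of v4 v0 v1 v2 v3])
      (use assms in \<open>auto simp: cyc_between_def insert_commute\<close>)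
qed

lemma copy_S3_obtain_pattern:
  assumes "contains_copy n H 5 S3"
  obtains v0 v1 v2 v3 v4 where "v0 < v1" "v1 < v2" "v2 < v3" "v3 < v4" "v4 < n"
    "S3_pattern H v0 v1 v2 v3 v4"
proof -
  obtain \<phi> where rng: "\<phi> ` {0..<5} \<subseteq> {0..<n}"
    and cyc: "\<forall>i j l. i < j \<and> j < l \<and> l < 5 \<longrightarrow> cyc_between (\<phi> i) (\<phi> j) (\<phi> l)"
    and edges: "\<forall>e\<in>S3. \<phi> ` e \<in> H"
    using assms unfolding contains_copy_def by blast
  define a b c d e where "a = \<phi> 0" "b = \<phi> 1" "c = \<phi> 2" "d = \<phi> 3" "e = \<phi> 4"
  have lt: "a < n" "b < n" "c < n" "d < n" "e < n"
    using rng unfolding a_b_c_d_e_def by (auto simp: image_subset_iff)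
  have abc: "cyc_between a b c" "cyc_between a b d" "cyc_between a b e"
      "cyc_between a c d" "cyc_between a c e" "cyc_between a d e"
      "cyc_between b c d" "cyc_between b c e" "cyc_between b d e" "cyc_between c d e"
    unfolding a_b_c_d_e_def using cyc by auto
  note bca = abc[THEN cyc_between_rotate]
    and cab = abc[THEN cyc_between_rotate, THEN cyc_between_rotate]
  have E: "{a, b, d} \<in> H" "{a, c, e} \<in> H"
    using edges unfolding S3_def a_b_c_d_e_def by auto
  have "a \<noteq> b" "a \<noteq> c" "a \<noteq> d" "a \<noteq> e" "b \<noteq> c" "b \<noteq> d" "b \<noteq> e" "c \<noteq> d" "c \<noteq> e" "d \<noteq> e"
    using abc[THEN cyc_between_distinct] by auto
  then show thesis
  proof (rule obtain_least_of_5)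
    assume least: "a < b" "a < c" "a < d" "a < e"
    with abc(1,4,6) have "b < c" "c < d" "d < e"
      by (auto intro: cyc_between_from_least)
    with least show thesis
      by (intro that[of a b c d e]) (use lt E in \<open>auto simp: S3_pattern_def\<close>)
  next
    assume least: "b < a" "b < c" "b < d" "b < e"
    with abc(7,9) bca(3) have "c < d" "d < e" "e < a"
      by (auto intro: cyc_between_from_least)
    with least show thesis
      by (intro that[of b c d e a]) (use lt E in \<open>auto simp: S3_pattern_def insert_commute\<close>)
  next
    assume least: "c < a" "c < b" "c < d" "c < e"
    with abc(10) bca(5) cab(1) have "d < e" "e < a" "a < b"
      by (auto intro: cyc_between_from_least)
    with least show thesis
      by (intro that[of c d e a b]) (use lt E in \<open>auto simp: S3_pattern_def insert_commute\<close>)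
  next
    assume least: "d < a" "d < b" "d < c" "d < e"
    with bca(6) cab(2,7) have "e < a" "a < b" "b < c"
      by (auto intro: cyc_between_from_least)
    with least show thesis
      by (intro that[of d e a b c]) (use lt E in \<open>auto simp: S3_pattern_def insert_commute\<close>)
  next
    assume least: "e < a" "e < b" "e < c" "e < d"
    with cab(3,8,10) have "a < b" "b < c" "c < d"
      by (auto intro: cyc_between_from_least)
    with least show thesis
      by (intro that[of e a b c d]) (use lt E in \<open>auto simp: S3_pattern_def insert_commute\<close>)
  qed
qed

lemma finite_triples: "finite (triples n)"
  unfolding triples_def by (rule finite_subset[of _ "Pow {0..<n}"]) auto

lemma saturated_subset_triples: "saturated n H k F \<Longrightarrow> H \<subseteq> triples n"
  unfolding saturated_def cgh3_def triples_def by auto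

lemma finite_saturated: "saturated n H k F \<Longrightarrow> finite H"
  using saturated_subset_triples finite_triples by (rule finite_subset)

lemma finite_Collect_saturated: "finite {H. saturated n H k F}"
proof (rule finite_subset[of _ "Pow (triples n)"])
  show "{H. saturated n H k F} \<subseteq> Pow (triples n)"
    using saturated_subset_triples by blast
qed (simp add: finite_triples)

lemma sat_cyc_le_card: "saturated n H k F \<Longrightarrow> sat_cyc n k F \<le> card H"
  unfolding sat_cyc_def using finite_Collect_saturated by (intro Min_le) auto

lemma sat_cyc_attained:
  assumes "saturated n H k F"
  obtains H' where "saturated n H' k F" "card H' = sat_cyc n k F"
proof -
  have "sat_cyc n k F \<in> card ` {H. saturated n H k F}"
    unfolding sat_cyc_def using assms finite_Collect_saturated by (intro Min_in) auto
  then obtain H' where "H' \<in> {H. saturated n H k F}" "sat_cyc n k F = card H'"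
    by (rule imageE)
  then show thesis
    using that by simp
qed

section \<open>A linear-size saturated hypergraph\<close>

definition fan_zigzag_edge :: "nat \<Rightarrow> nat \<Rightarrow> nat \<Rightarrow> nat \<Rightarrow> bool" where
  "fan_zigzag_edge n p q r \<longleftrightarrow> r < n \<and>
     ((p = 0 \<and> 1 \<le> q \<and> r = q + 1) \<or> (p = 0 \<and> 1 \<le> q \<and> q < r \<and> (q + r = n \<or> q + r = n + 1)) \<or>
      (1 \<le> p \<and> q = p + 1 \<and> r = p + 2))"

definition fan_zigzag :: "nat \<Rightarrow> nat set set" where
  "fan_zigzag n = {{p, q, r} | p q r. p < q \<and> q < r \<and> fan_zigzag_edge n p q r}"

lemma sorted_triple_in_fan_zigzag_iff:
  assumes "p < q" "q < r"
  shows "{p, q, r} \<in> fan_zigzag n \<longleftrightarrow> fan_zigzag_edge n p q r"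
proof
  assume "{p, q, r} \<in> fan_zigzag n"
  then obtain a b c where "a < b" "b < c" "{p, q, r} = {a, b, c}" "fan_zigzag_edge n a b c"
    unfolding fan_zigzag_def by blast
  then show "fan_zigzag_edge n p q r"
    using sorted_triple_eq_iff[OF assms] by simp
qed (use assms in \<open>auto simp: fan_zigzag_def\<close>)

lemma card_fan_zigzag_le: "card (fan_zigzag n) \<le> 4 * n"
proof -
  let ?A = "(\<lambda>x. {0, x, x + 1}) ` {..<n}" and ?B = "(\<lambda>x. {0, x, n - x}) ` {..<n}"
  let ?C = "(\<lambda>x. {0, x, n + 1 - x}) ` {..<n}" and ?D = "(\<lambda>x. {x, x + 1, x + 2}) ` {..<n}"
  have "fan_zigzag n \<subseteq> ?A \<union> ?B \<union> ?C \<union> ?D"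
  proof
    fix e assume "e \<in> fan_zigzag n"
    then obtain p q r where pqr: "p < q" "q < r" "e = {p, q, r}" and "fan_zigzag_edge n p q r"
      unfolding fan_zigzag_def by blast
    then consider "p = 0" "r = q + 1" "r < n" | "p = 0" "r < n" "q + r = n" | "p = 0" "r < n" "q + r = n + 1"
      | "q = p + 1" "r = p + 2" "r < n"
      unfolding fan_zigzag_edge_def by blast
    then show "e \<in> ?A \<union> ?B \<union> ?C \<union> ?D"
    proof cases
      case 1
      then have "e \<in> ?A" using pqr by auto
      then show ?thesis by blast
    next
      case 2
      then have "e = {0, q, n - q}" "q < n" using pqr by auto
      then show ?thesis by blast
    next
      case 3
      then have "e = {0, q, n + 1 - q}" "q < n" using pqr by auto
      then show ?thesis by blast
    next
      case 4
      then have "e \<in> ?D" using pqr by auto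
      then show ?thesis by blast
    qed
  qed
  then have "card (fan_zigzag n) \<le> card (?A \<union> ?B \<union> ?C \<union> ?D)"
    by (rule card_mono[rotated]) simp
  also have "\<dots> \<le> card ?A + card ?B + card ?C + card ?D"
    using card_Un_le[of "?A \<union> ?B \<union> ?C" ?D] card_Un_le[of "?A \<union> ?B" ?C] card_Un_le[of ?A ?B]
    by linarith
  also have "\<dots> \<le> 4 * n"
  proof -
    have "card (f ` {..<n}) \<le> n" for f :: "nat \<Rightarrow> nat set"
      using card_image_le[OF finite_lessThan, of f n] by simp
    from this[of "\<lambda>x. {0, x, x + 1}"] this[of "\<lambda>x. {0, x, n - x}"]
      this[of "\<lambda>x. {0, x, n + 1 - x}"] this[of "\<lambda>x. {x, x + 1, x + 2}"]
    show ?thesis by linarith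
  qed
  finally show ?thesis .
qed

lemma fan_zigzag_S3_free: "\<not> contains_copy n (fan_zigzag n) 5 S3"
proof
  assume "contains_copy n (fan_zigzag n) 5 S3"
  then obtain v0 v1 v2 v3 v4 where v: "v0 < v1" "v1 < v2" "v2 < v3" "v3 < v4" "v4 < n"
    and "S3_pattern (fan_zigzag n) v0 v1 v2 v3 v4"
    by (rule copy_S3_obtain_pattern)
  moreover have "v0 < v2" "v0 < v3" "v1 < v3" "v1 < v4" "v2 < v4"
    using v by linarith+
  ultimately show False
    unfolding S3_pattern_def sorted_triple_in_fan_zigzag_iff[OF v(1) \<open>v1 < v3\<close>]
      sorted_triple_in_fan_zigzag_iff[OF \<open>v0 < v2\<close> \<open>v2 < v4\<close>]
      sorted_triple_in_fan_zigzag_iff[OF v(2) \<open>v2 < v4\<close>]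
      sorted_triple_in_fan_zigzag_iff[OF \<open>v0 < v2\<close> v(3)]
      sorted_triple_in_fan_zigzag_iff[OF \<open>v1 < v3\<close> v(4)]
    by (elim disjE conjE) (auto simp: fan_zigzag_edge_def)
qed

lemma saturated_fan_zigzag: "saturated n (fan_zigzag n) 5 S3"
  unfolding saturated_def
proof (intro conjI ballI)
  show "cgh3 n (fan_zigzag n)"
    unfolding cgh3_def fan_zigzag_def fan_zigzag_edge_def by auto
  show "\<not> contains_copy n (fan_zigzag n) 5 S3"
    by (rule fan_zigzag_S3_free)
  fix e assume e: "e \<in> triples n - fan_zigzag n"
  then obtain p q r where pqr: "p < q" "q < r" "e = {p, q, r}"
    unfolding triples_def by (auto elim: card_3_obtain_sorted)
  have "r < n"
    using e pqr unfolding triples_def by auto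
  have new: "\<not> fan_zigzag_edge n p q r"
    using e pqr sorted_triple_in_fan_zigzag_iff by auto
  let ?H = "insert e (fan_zigzag n)"
  have old: "{a, b, c} \<in> ?H" if "a < b" "b < c" "fan_zigzag_edge n a b c" for a b c
    using that sorted_triple_in_fan_zigzag_iff by blast
  have "e \<in> ?H" by simp
  show "contains_copy n ?H 5 S3"
  proof (cases "p = 0")
    case p: True
    with new pqr \<open>r < n\<close> have "q + 1 < r" "q + r \<noteq> n" "q + r \<noteq> n + 1"
      unfolding fan_zigzag_edge_def by auto
    show ?thesis
    proof (cases "q + r < n")
      case True
      with pqr p \<open>q + 1 < r\<close> have "{0, q + 1, n - q} \<in> ?H"
        by (intro old) (auto simp: fan_zigzag_edge_def)
      with \<open>e \<in> ?H\<close> pqr p have "S3_pattern ?H 0 q (q + 1) r (n - q)"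
        unfolding S3_pattern_def by auto
      with True pqr p \<open>q + 1 < r\<close> show ?thesis
        by (intro contains_copy_S3_if_pattern) auto
    next
      case False
      with pqr p \<open>r < n\<close> \<open>q + 1 < r\<close> \<open>q + r \<noteq> n\<close> \<open>q + r \<noteq> n + 1\<close>
      have "{0, n + 1 - r, r - 1} \<in> ?H"
        by (intro old) (auto simp: fan_zigzag_edge_def)
      with \<open>e \<in> ?H\<close> pqr p have "S3_pattern ?H 0 (n + 1 - r) q (r - 1) r"
        unfolding S3_pattern_def by auto
      with False pqr p \<open>r < n\<close> \<open>q + 1 < r\<close> \<open>q + r \<noteq> n\<close> \<open>q + r \<noteq> n + 1\<close> show ?thesis
        by (intro contains_copy_S3_if_pattern) auto
    qed
  next
    case p: False
    show ?thesis
    proof (cases "q = p + 1")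
      case True
      with new p \<open>r < n\<close> have "q + 1 < r"
        using pqr unfolding fan_zigzag_edge_def by auto
      with pqr \<open>r < n\<close> have "{0, q, q + 1} \<in> ?H"
        by (intro old) (auto simp: fan_zigzag_edge_def)
      with \<open>e \<in> ?H\<close> pqr have "S3_pattern ?H 0 p q (q + 1) r"
        unfolding S3_pattern_def by auto
      with True pqr p \<open>r < n\<close> \<open>q + 1 < r\<close> show ?thesis
        by (intro contains_copy_S3_if_pattern) auto
    next
      case False
      with pqr p \<open>r < n\<close> have "{0, q - 1, q} \<in> ?H"
        by (intro old) (auto simp: fan_zigzag_edge_def)
      with \<open>e \<in> ?H\<close> pqr have "S3_pattern ?H 0 p (q - 1) q r"
        unfolding S3_pattern_def by auto
      with False pqr p \<open>r < n\<close> show ?thesis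
        by (intro contains_copy_S3_if_pattern) auto
    qed
  qed
qed

section \<open>Lower bound\<close>

text \<open>The edges \<open>{v0, v1, v3}\<close>, \<open>{v0, v2, v4}\<close>, \<open>{v1, v3, v4}\<close>, \<open>{v0, v2, v3}\<close>,
  \<open>{v1, v2, v4}\<close> form a 5-cycle whose adjacent pairs are the five copies of S3 on
  \<open>v0 < \<dots> < v4\<close>.  A missing triple whose insertion completes a copy is one of them, and one of
  its two neighbours on the cycle is already an edge.\<close>

lemma saturated_obtain_partner:
  assumes sat: "saturated n H 5 S3" and "e \<in> triples n" "e \<notin> H"
  obtains v0 v1 v2 v3 v4 where "v0 < v1" "v1 < v2" "v2 < v3" "v3 < v4" "v4 < n"
    "e = {v0, v1, v3} \<and> ({v0, v2, v4} \<in> H \<or> {v1, v2, v4} \<in> H) \<or>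
     e = {v0, v2, v4} \<and> ({v0, v1, v3} \<in> H \<or> {v1, v3, v4} \<in> H) \<or>
     e = {v1, v2, v4} \<and> ({v0, v1, v3} \<in> H \<or> {v0, v2, v3} \<in> H) \<or>
     e = {v0, v2, v3} \<and> ({v1, v2, v4} \<in> H \<or> {v1, v3, v4} \<in> H) \<or>
     e = {v1, v3, v4} \<and> ({v0, v2, v3} \<in> H \<or> {v0, v2, v4} \<in> H)"
proof -
  from sat assms(2,3) have copy: "contains_copy n (insert e H) 5 S3"
    and free: "\<not> contains_copy n H 5 S3"
    unfolding saturated_def by auto
  from copy obtain v0 v1 v2 v3 v4 where v: "v0 < v1" "v1 < v2" "v2 < v3" "v3 < v4" "v4 < n"
    and new: "S3_pattern (insert e H) v0 v1 v2 v3 v4"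
    by (rule copy_S3_obtain_pattern)
  have old: "\<not> S3_pattern H v0 v1 v2 v3 v4"
    using free contains_copy_S3_if_pattern[OF v] by blast
  have "v0 < v2" "v1 < v3" "v2 < v4"
    using v by linarith+
  then have "{v0, v1, v3} \<noteq> {v0, v2, v4}" "{v1, v2, v4} \<noteq> {v0, v1, v3}"
    "{v0, v2, v3} \<noteq> {v1, v2, v4}" "{v1, v3, v4} \<noteq> {v0, v2, v3}" "{v0, v2, v4} \<noteq> {v1, v3, v4}"
    using v by (simp_all add: sorted_triple_eq_iff)
  with new old show thesis
    unfolding S3_pattern_def by (intro that[OF v]) (simp only: insert_iff, argo)
qed

lemma saturated_obtain_sorted_partner:
  assumes sat: "saturated n H 5 S3" and xyz: "x < y" "y < z" "z < n" and missing: "{x, y, z} \<notin> H"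
  obtains v0 v1 v2 v3 v4 where "v0 < v1" "v1 < v2" "v2 < v3" "v3 < v4" "v4 < n"
    "(x = v0 \<and> y = v1 \<and> z = v3) \<and> ({v0, v2, v4} \<in> H \<or> {v1, v2, v4} \<in> H) \<or>
     (x = v0 \<and> y = v2 \<and> z = v4) \<and> ({v0, v1, v3} \<in> H \<or> {v1, v3, v4} \<in> H) \<or>
     (x = v1 \<and> y = v2 \<and> z = v4) \<and> ({v0, v1, v3} \<in> H \<or> {v0, v2, v3} \<in> H) \<or>
     (x = v0 \<and> y = v2 \<and> z = v3) \<and> ({v1, v2, v4} \<in> H \<or> {v1, v3, v4} \<in> H) \<or>
     (x = v1 \<and> y = v3 \<and> z = v4) \<and> ({v0, v2, v3} \<in> H \<or> {v0, v2, v4} \<in> H)"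
proof -
  have "{x, y, z} \<in> triples n"
    using xyz unfolding triples_def by auto
  then obtain v0 v1 v2 v3 v4 where v: "v0 < v1" "v1 < v2" "v2 < v3" "v3 < v4" "v4 < n"
    and partner: "{x, y, z} = {v0, v1, v3} \<and> ({v0, v2, v4} \<in> H \<or> {v1, v2, v4} \<in> H) \<or>
     {x, y, z} = {v0, v2, v4} \<and> ({v0, v1, v3} \<in> H \<or> {v1, v3, v4} \<in> H) \<or>
     {x, y, z} = {v1, v2, v4} \<and> ({v0, v1, v3} \<in> H \<or> {v0, v2, v3} \<in> H) \<or>
     {x, y, z} = {v0, v2, v3} \<and> ({v1, v2, v4} \<in> H \<or> {v1, v3, v4} \<in> H) \<or>
     {x, y, z} = {v1, v3, v4} \<and> ({v0, v2, v3} \<in> H \<or> {v0, v2, v4} \<in> H)"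
    by (rule saturated_obtain_partner[OF sat _ missing])
  have "v0 < v2" "v1 < v3" "v2 < v4"
    using v by linarith+
  note eq = sorted_triple_eq_iff[OF xyz(1,2)]
  from partner show thesis
    unfolding eq[OF v(1) \<open>v1 < v3\<close>] eq[OF \<open>v0 < v2\<close> \<open>v2 < v4\<close>] eq[OF v(2) \<open>v2 < v4\<close>]
      eq[OF \<open>v0 < v2\<close> v(3)] eq[OF \<open>v1 < v3\<close> v(4)]
    by (rule that[OF v])
qed

lemma saturated_consecutive_triple:
  assumes sat: "saturated n H 5 S3" and "i + 2 < n"
  shows "{i, i + 1, i + 2} \<in> H"
proof (rule ccontr)
  assume missing: "{i, i + 1, i + 2} \<notin> H"
  show False
    by (rule saturated_obtain_sorted_partner[OF sat _ _ _ missing]) (use assms in auto)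
qed

text \<open>The gapped triple at \<open>i\<close> is \<open>{i, i + 1, i + 3}\<close> for \<open>t = False\<close> and
  \<open>{i, i + 2, i + 3}\<close> for \<open>t = True\<close>.  \<open>gap_witness t i p q r\<close> holds if \<open>{p, q, r}\<close> is this
  triple or one of the edges whose presence saturation forces when the triple is missing.\<close>

definition gap_witness :: "bool \<Rightarrow> nat \<Rightarrow> nat \<Rightarrow> nat \<Rightarrow> nat \<Rightarrow> bool" where
  "gap_witness t i p q r \<longleftrightarrow>
     (if t then (p = i \<and> q = i + 2 \<and> r = i + 3) \<or> (p = i + 1 \<and> q = i + 3 \<and> i + 3 < r) \<or>
       (q = i + 1 \<and> r = i + 3 \<and> p < i) \<or> (p = i + 1 \<and> q = i + 2 \<and> i + 3 < r) \<or>
       (q = i + 1 \<and> r = i + 2 \<and> p < i)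
     else (p = i \<and> q = i + 1 \<and> r = i + 3) \<or> (p = i \<and> q = i + 2 \<and> i + 3 < r) \<or>
       (q = i \<and> r = i + 2 \<and> p < i) \<or> (p = i + 1 \<and> q = i + 2 \<and> i + 3 < r) \<or>
       (q = i + 1 \<and> r = i + 2 \<and> p < i))"

lemma saturated_obtain_gap_witness_False:
  assumes sat: "saturated n H 5 S3" and "i + 3 < n"
  obtains p q r where "{p, q, r} \<in> H" "p < q" "q < r" "gap_witness False i p q r"
proof (cases "{i, i + 1, i + 3} \<in> H")
  case True
  then show thesis
    by (intro that[of i "i + 1" "i + 3"]) (auto simp: gap_witness_def)
next
  case missing: False
  have ord: "i < i + 1" "i + 1 < i + 3" by simp_all
  show thesis
  proof (rule saturated_obtain_sorted_partner[OF sat ord assms(2) missing])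
    fix v0 v1 v2 v3 v4
    assume v: "v0 < v1" "v1 < v2" "v2 < v3" "v3 < v4" and "v4 < n" and
      partner: "(i = v0 \<and> i + 1 = v1 \<and> i + 3 = v3) \<and> ({v0, v2, v4} \<in> H \<or> {v1, v2, v4} \<in> H) \<or>
       (i = v0 \<and> i + 1 = v2 \<and> i + 3 = v4) \<and> ({v0, v1, v3} \<in> H \<or> {v1, v3, v4} \<in> H) \<or>
       (i = v1 \<and> i + 1 = v2 \<and> i + 3 = v4) \<and> ({v0, v1, v3} \<in> H \<or> {v0, v2, v3} \<in> H) \<or>
       (i = v0 \<and> i + 1 = v2 \<and> i + 3 = v3) \<and> ({v1, v2, v4} \<in> H \<or> {v1, v3, v4} \<in> H) \<or>
       (i = v1 \<and> i + 1 = v3 \<and> i + 3 = v4) \<and> ({v0, v2, v3} \<in> H \<or> {v0, v2, v4} \<in> H)"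
    have "\<not> (i = v0 \<and> i + 1 = v2)" "\<not> (i = v1 \<and> i + 1 = v3)"
      using v by linarith+
    with partner consider
        (A) "i = v0" "i + 1 = v1" "i + 3 = v3" "{v0, v2, v4} \<in> H \<or> {v1, v2, v4} \<in> H"
      | (C) "i = v1" "i + 1 = v2" "i + 3 = v4" "{v0, v1, v3} \<in> H \<or> {v0, v2, v3} \<in> H"
      by argo
    then show thesis
    proof cases
      case A
      then have "v2 = i + 2" "i + 3 < v4"
        using v by linarith+
      with A(1-3) v show thesis
        using A(4) by (elim disjE) (intro that[of v0 v2 v4] that[of v1 v2 v4]; simp add: gap_witness_def)+
    next
      case C
      then have "v3 = i + 2" "v0 < i"
        using v by linarith+
      with C(1-3) v show thesis
        using C(4) by (elim disjE) (intro that[of v0 v1 v3] that[of v0 v2 v3]; simp add: gap_witness_def)+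
    qed
  qed
qed


lemma saturated_obtain_gap_witness_True:
  assumes sat: "saturated n H 5 S3" and "i + 3 < n"
  obtains p q r where "{p, q, r} \<in> H" "p < q" "q < r" "gap_witness True i p q r"
proof (cases "{i, i + 2, i + 3} \<in> H")
  case True
  then show thesis
    by (intro that[of i "i + 2" "i + 3"]) (auto simp: gap_witness_def)
next
  case missing: False
  have ord: "i < i + 2" "i + 2 < i + 3" by simp_all
  show thesis
  proof (rule saturated_obtain_sorted_partner[OF sat ord assms(2) missing])
    fix v0 v1 v2 v3 v4
    assume v: "v0 < v1" "v1 < v2" "v2 < v3" "v3 < v4" and "v4 < n" and
      partner: "(i = v0 \<and> i + 2 = v1 \<and> i + 3 = v3) \<and> ({v0, v2, v4} \<in> H \<or> {v1, v2, v4} \<in> H) \<or>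
       (i = v0 \<and> i + 2 = v2 \<and> i + 3 = v4) \<and> ({v0, v1, v3} \<in> H \<or> {v1, v3, v4} \<in> H) \<or>
       (i = v1 \<and> i + 2 = v2 \<and> i + 3 = v4) \<and> ({v0, v1, v3} \<in> H \<or> {v0, v2, v3} \<in> H) \<or>
       (i = v0 \<and> i + 2 = v2 \<and> i + 3 = v3) \<and> ({v1, v2, v4} \<in> H \<or> {v1, v3, v4} \<in> H) \<or>
       (i = v1 \<and> i + 2 = v3 \<and> i + 3 = v4) \<and> ({v0, v2, v3} \<in> H \<or> {v0, v2, v4} \<in> H)"
    have "\<not> (i + 2 = v1 \<and> i + 3 = v3)" "\<not> (i + 2 = v2 \<and> i + 3 = v4)"
      using v by linarith+
    with partner consider
        (D) "i = v0" "i + 2 = v2" "i + 3 = v3" "{v1, v2, v4} \<in> H \<or> {v1, v3, v4} \<in> H"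
      | (E) "i = v1" "i + 2 = v3" "i + 3 = v4" "{v0, v2, v3} \<in> H \<or> {v0, v2, v4} \<in> H"
      by argo
    then show thesis
    proof cases
      case D
      then have "v1 = i + 1" "i + 3 < v4"
        using v by linarith+
      with D(1-3) v show thesis
        using D(4) by (elim disjE) (intro that[of v1 v2 v4] that[of v1 v3 v4]; simp add: gap_witness_def)+
    next
      case E
      then have "v2 = i + 1" "v0 < i"
        using v by linarith+
      with E(1-3) v show thesis
        using E(4) by (elim disjE) (intro that[of v0 v2 v3] that[of v0 v2 v4]; simp add: gap_witness_def)+
    qed
  qed
qed

lemma saturated_obtain_gap_witness:
  assumes "saturated n H 5 S3" and "i + 3 < n"
  obtains p q r where "{p, q, r} \<in> H" "p < q" "q < r" "gap_witness t i p q r"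
proof (cases t)
  case True
  show thesis
    by (rule saturated_obtain_gap_witness_True[OF assms], erule that) (simp_all add: True)
next
  case False
  show thesis
    by (rule saturated_obtain_gap_witness_False[OF assms], erule that) (simp_all add: False)
qed

lemma not_gap_witness_consecutive: "\<not> gap_witness t i p (p + 1) (p + 2)"
  unfolding gap_witness_def by (auto split: if_splits)

lemma gap_witness_fiber_subset:
  assumes "p < q" "q < r"
  obtains a b c d where "{(i, t). gap_witness t i p q r} \<subseteq> {a, b, c, d}"
proof -
  consider "q = p + 1" | "q = p + 2" "r = q + 1" | "q = p + 2" "r \<noteq> q + 1" | "p + 2 < q"
    using assms by linarith
  then show thesis
  proof cases
    case 1
    then show thesis
      by (intro that[of "(p - 1, False)" "(p - 1, True)" "(p, False)" "(q, False)"])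
        (auto simp: gap_witness_def)
  next
    case 2
    then show thesis
      by (intro that[of "(p - 1, True)" "(p, True)" "(q - 1, False)" "(q - 1, True)"])
        (auto simp: gap_witness_def)
  next
    case 3
    then show thesis
      by (intro that[of "(p - 1, True)" "(p, False)" "(q - 1, True)" "(q, False)"])
        (use assms in \<open>auto simp: gap_witness_def\<close>)
  next
    case 4
    then show thesis
      by (intro that[of "(q - 1, False)" "(q - 1, True)" "(q, False)" "(q, True)"])
        (auto simp: gap_witness_def)
  qed
qed

lemma gap_witness_set_fiber_small:
  fixes e :: "nat set"
  defines "F \<equiv> {(i, t). \<exists>p q r. p < q \<and> q < r \<and> e = {p, q, r} \<and> gap_witness t i p q r}"
  shows "finite F \<and> card F \<le> 4"
proof (cases "\<exists>p q r. p < q \<and> q < r \<and> e = {p, q, r}")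
  case True
  then obtain p q r where pqr: "p < q" "q < r" "e = {p, q, r}" by blast
  have "(\<exists>a b c. a < b \<and> b < c \<and> e = {a, b, c} \<and> gap_witness t i a b c) \<longleftrightarrow> gap_witness t i p q r"
    for t i
  proof
    assume "\<exists>a b c. a < b \<and> b < c \<and> e = {a, b, c} \<and> gap_witness t i a b c"
    then obtain a b c where "a < b" "b < c" "e = {a, b, c}" "gap_witness t i a b c" by blast
    then show "gap_witness t i p q r"
      using sorted_triple_eq_iff[OF pqr(1,2)] pqr(3) by simp
  qed (use pqr in blast)
  then have F: "F = {(i, t). gap_witness t i p q r}"
    unfolding F_def by simp
  obtain a b c d where sub: "{(i, t). gap_witness t i p q r} \<subseteq> {a, b, c, d}"
    by (rule gap_witness_fiber_subset[OF pqr(1,2)])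
  have "card {(i, t). gap_witness t i p q r} \<le> card {a, b, c, d}"
    using sub by (intro card_mono) simp_all
  also have "\<dots> \<le> 4"
    using card_length[of "[a, b, c, d]"] by simp
  finally show ?thesis
    using F finite_subset[OF sub] by simp
next
  case False
  then have "F = {}"
    unfolding F_def by blast
  then show ?thesis by simp
qed

lemma saturated_card_non_consecutive_ge:
  assumes sat: "saturated n H 5 S3"
  shows "2 * (n - 3) \<le> 4 * card (H - (\<lambda>j. {j, j + 1, j + 2}) ` {..<n - 2})"
proof -
  define C where "C = (\<lambda>j. {j, j + 1, j + 2}) ` {..<n - 2}"
  define fiber where
    "fiber e = {(i, t). \<exists>p q r. p < q \<and> q < r \<and> e = {p, q, r} \<and> gap_witness t i p q r}" for e
  have "finite H"
    using sat by (rule finite_saturated)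
  have fiber_small: "finite (fiber e) \<and> card (fiber e) \<le> 4" for e
    unfolding fiber_def by (rule gap_witness_set_fiber_small)
  have "{..<n - 3} \<times> UNIV \<subseteq> (\<Union>e \<in> H - C. fiber e)"
  proof
    fix x assume "x \<in> {..<n - 3} \<times> (UNIV :: bool set)"
    then obtain i t where x: "x = (i, t)" "i + 3 < n" by auto
    obtain p q r where pqr: "{p, q, r} \<in> H" "p < q" "q < r" and w: "gap_witness t i p q r"
      by (rule saturated_obtain_gap_witness[OF sat \<open>i + 3 < n\<close>])
    have "{p, q, r} \<notin> C"
    proof
      assume "{p, q, r} \<in> C"
      then obtain j where "{p, q, r} = {j, j + 1, j + 2}"
        unfolding C_def by blast
      with pqr have "q = p + 1" "r = p + 2"
        by (simp_all add: sorted_triple_eq_iff)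
      with w show False
        using not_gap_witness_consecutive by blast
    qed
    with pqr w x show "x \<in> (\<Union>e \<in> H - C. fiber e)"
      unfolding fiber_def by blast
  qed
  then have "card ({..<n - 3} \<times> (UNIV :: bool set)) \<le> card (\<Union>e \<in> H - C. fiber e)"
    by (rule card_mono[rotated]) (use \<open>finite H\<close> fiber_small in blast)
  also have "\<dots> \<le> (\<Sum>e \<in> H - C. card (fiber e))"
    using \<open>finite H\<close> by (intro card_UN_le) simp
  also have "\<dots> \<le> 4 * card (H - C)"
    using sum_mono[of "H - C" "\<lambda>e. card (fiber e)" "\<lambda>_. 4"] fiber_small by simp
  finally show ?thesis
    unfolding C_def by simp
qed

lemma saturated_card_ge:
  assumes sat: "saturated n H 5 S3"
  shows "6 * n \<le> 4 * card H + 14"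
proof -
  define C where "C = (\<lambda>j. {j, j + 1, j + 2}) ` {..<n - 2}"
  have "finite H"
    using sat by (rule finite_saturated)
  moreover have "C \<subseteq> H"
    unfolding C_def using saturated_consecutive_triple[OF sat] by auto
  ultimately have "card (H - C) = card H - card C" "card C \<le> card H"
    by (simp_all add: card_Diff_subset finite_subset card_mono)
  moreover have "card C = n - 2"
    unfolding C_def by (rule card_consecutive_triples)
  ultimately show ?thesis
    using saturated_card_non_consecutive_ge[OF sat] unfolding C_def[symmetric] by linarith
qed

lemma sat_cyc_S3_le: "sat_cyc n 5 S3 \<le> 4 * n"
  using sat_cyc_le_card[OF saturated_fan_zigzag] card_fan_zigzag_le by (rule order_trans)

lemma sat_cyc_S3_ge: "6 * n \<le> 4 * sat_cyc n 5 S3 + 14"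
proof -
  obtain H where "saturated n H 5 S3" "card H = sat_cyc n 5 S3"
    by (rule sat_cyc_attained[OF saturated_fan_zigzag])
  then show ?thesis
    using saturated_card_ge[of n H] by simp
qed

lemma const_in_smallo_real_nat: "(\<lambda>_. c :: real) \<in> o(\<lambda>n. real n)"
proof (rule smalloI_tendsto)
  show "((\<lambda>n. c / real n) \<longlongrightarrow> 0) at_top"
    by (rule tendsto_divide_0[OF tendsto_const])
      (rule filterlim_at_top_imp_at_infinity[OF filterlim_real_sequentially])
qed (simp add: eventually_gt_at_top eventually_mono)

lemma le_mult_log2: "2 \<le> n \<Longrightarrow> real n \<le> real n * log 2 (real n)"
proof -
  assume "2 \<le> n"
  then have "log 2 2 \<le> log 2 (real n)"
    by (subst log_le_cancel_iff) auto
  then show ?thesis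
    by (simp add: mult_le_cancel_left1)
qed

theorem propositionA4:
  shows "(\<exists>g :: nat \<Rightarrow> real. g \<in> o(\<lambda>n. real n) \<and>
            (\<forall>\<^sub>F n in at_top. 3 * real n / 2 + g n \<le> real (sat_cyc n 5 S3)))
         \<and> (\<lambda>n. real (sat_cyc n 5 S3)) \<in> O(\<lambda>n. real n * log 2 (real n))"
proof
  have "3 * real n / 2 - 7 / 2 \<le> real (sat_cyc n 5 S3)" for n
    using sat_cyc_S3_ge[of n] by linarith
  then show "\<exists>g :: nat \<Rightarrow> real. g \<in> o(\<lambda>n. real n) \<and>
      (\<forall>\<^sub>F n in at_top. 3 * real n / 2 + g n \<le> real (sat_cyc n 5 S3))"
    using const_in_smallo_real_nat[of "- 7 / 2"] by (intro exI[of _ "\<lambda>_. - 7 / 2"]) simp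
  have "real (sat_cyc n 5 S3) \<le> 4 * (real n * log 2 (real n))" if "2 \<le> n" for n
    using sat_cyc_S3_le[of n] le_mult_log2[OF that] by linarith
  then show "(\<lambda>n. real (sat_cyc n 5 S3)) \<in> O(\<lambda>n. real n * log 2 (real n))"
    by (intro bigoI[where c = 4] eventually_mono[OF eventually_ge_at_top[of 2]]) auto
qed

end
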